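(* Let $(\mathcal{A},\varphi)$ be a unital algebra with a linear functional $\varphi$, $\varphi(\mathbf 1)=1$. For all $n\in\mathbb{N}_+$, $k\in[n]$ and $a_1,\dots,a_{n+1}\in\mathcal{A}$, $$\kappa^*_{n+1}(a_1,\dots,a_{n+1})=\kappa^*_n(a_1,\dots,a_{k-1},a_ka_{k+1},a_{k+2},\dots,a_{n+1})-\kappa^*_k(a_1,\dots,a_k)\,\kappa^*_{n+1-k}(a_{k+1},\dots,a_{n+1}).$$ Moreover, if $\mathcal{A}=B(\mathcal H)$ for a Hilbert space $\mathcal H$ and $\varphi(a)=\langle a\xi,\xi\rangle$ for a unit vector $\xi$, then $\kappa^*_n(a_1,\dots,a_n)=\varphi(a_1P^\perp a_2P^\perp\cdots P^\perp a_n)$, where $P^\perp$ is the orthogonal projection onto $(\mathbb{C}\xi)^\perp$.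
   Context: The multilinear functionals $\kappa^*_n$ are defined recursively by $\kappa^*_1(a)=\varphi(a)$ and $\kappa^*_{n+1}(a_1,\dots,a_{n+1})=\kappa^*_n(a_1a_2,a_3,\dots,a_{n+1})-\varphi(a_1)\kappa^*_n(a_2,\dots,a_{n+1})$. *)

theory Defs
  imports "HOL-Analysis.Analysis"
begin

text \<open>The functionals kappa-star, defined by the recursion of the paper, for an algebra
  whose multiplication is given explicitly as m (so that it applies both to an abstract
  ring and to operators under composition). A list [a1,...,an] (n >= 1) is the argument
  tuple; the value at the empty list is an irrelevant default.\<close>
fun kstar_gen :: "('a \<Rightarrow> 'a \<Rightarrow> 'a) \<Rightarrow> ('a \<Rightarrow> 'k::comm_ring) \<Rightarrow> 'a list \<Rightarrow> 'k" where
  "kstar_gen m \<phi> [] = 0"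
| "kstar_gen m \<phi> [a] = \<phi> a"
| "kstar_gen m \<phi> (a # b # r) = kstar_gen m \<phi> (m a b # r) - \<phi> a * kstar_gen m \<phi> (b # r)"

abbreviation kstar :: "('a::ring_1 \<Rightarrow> 'k::comm_ring) \<Rightarrow> 'a list \<Rightarrow> 'k" where
  "kstar \<phi> \<equiv> kstar_gen (*) \<phi>"

text \<open>A unital complex algebra: a ring with a central unital ring homomorphism iota from the
  complex numbers (scalar multiplication c.a = iota c * a). phi is a complex-linear functional
  with phi 1 = 1.\<close>
definition unital_calg_state :: "(complex \<Rightarrow> 'a::ring_1) \<Rightarrow> ('a \<Rightarrow> complex) \<Rightarrow> bool" where
  "unital_calg_state \<iota> \<phi> \<longleftrightarrow>
     (\<forall>c d. \<iota> (c + d) = \<iota> c + \<iota> d) \<and> (\<forall>c d. \<iota> (c * d) = \<iota> c * \<iota> d) \<and> \<iota> 1 = 1 \<and>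
     (\<forall>c a. \<iota> c * a = a * \<iota> c) \<and>
     (\<forall>a b. \<phi> (a + b) = \<phi> a + \<phi> b) \<and> (\<forall>c a. \<phi> (\<iota> c * a) = c * \<phi> a) \<and>
     \<phi> 1 = 1"

text \<open>Complex Hilbert spaces are encoded as real Hilbert spaces with an orthogonal complex
  structure J (multiplication by i), J o J = -id.\<close>
definition complex_structure :: "('h::{real_inner,complete_space} \<Rightarrow> 'h) \<Rightarrow> bool" where
  "complex_structure J \<longleftrightarrow> linear J \<and> (\<forall>x. J (J x) = - x) \<and> (\<forall>x y. inner (J x) (J y) = inner x y)"

definition cinner :: "('h::real_inner \<Rightarrow> 'h) \<Rightarrow> 'h \<Rightarrow> 'h \<Rightarrow> complex" where
  "cinner J x y = Complex (inner x y) (inner x (J y))"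

definition BH :: "('h::real_normed_vector \<Rightarrow> 'h) \<Rightarrow> ('h \<Rightarrow> 'h) set" where
  "BH J = {a. bounded_linear a \<and> a \<circ> J = J \<circ> a}"

text \<open>Orthogonal projection onto the orthogonal complement of the complex line C xi
  (= real span of xi and J xi), for a unit vector xi: x - <x,xi> xi.\<close>
definition perp_proj :: "('h::real_inner \<Rightarrow> 'h) \<Rightarrow> 'h \<Rightarrow> 'h \<Rightarrow> 'h" where
  "perp_proj J \<xi> x = x - (inner x \<xi>) *\<^sub>R \<xi> - (inner x (J \<xi>)) *\<^sub>R J \<xi>"

fun alt_prod :: "('a \<Rightarrow> 'a \<Rightarrow> 'a) \<Rightarrow> 'a \<Rightarrow> 'a list \<Rightarrow> 'a" where
  "alt_prod m p [] = undefined"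
| "alt_prod m p [a] = a"
| "alt_prod m p (a # b # r) = m (m a p) (alt_prod m p (b # r))"

end

theory Submission
  imports Defs
begin

text \<open>The contraction identity is purely combinatorial: unfolding the recursion at the
  leading factor on both sides and inducting on the length of the left block, it holds for
  every associative multiplication and every functional.
  For the vector state, the recursion peels off a1 and leaves
  phi(a1 a2 ...) - phi(a1) phi(a2 ...), which is what inserting P after a1 produces,
  because <a P y, xi> = <a y, xi> - <a xi, xi> <y, xi>.\<close>

lemma kstar_gen_Cons:
  "l \<noteq> [] \<Longrightarrow> kstar_gen m \<phi> (a # l) = kstar_gen m \<phi> (m a (hd l) # tl l) - \<phi> a * kstar_gen m \<phi> l"
  by (cases l) auto

lemma kstar_gen_append:
  assumes assoc: "\<And>x y z. m (m x y) z = m x (m y z)"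
  shows "kstar_gen m \<phi> ((a # xs) @ y # ys) =
           kstar_gen m \<phi> (butlast (a # xs) @ m (last (a # xs)) y # ys)
           - kstar_gen m \<phi> (a # xs) * kstar_gen m \<phi> (y # ys)"
proof (induction xs arbitrary: a)
  case Nil
  then show ?case by simp
next
  case (Cons x xs)
  define B where "B = butlast (x # xs) @ m (last (x # xs)) y # ys"
  have B: "B \<noteq> []" "m a (hd B) # tl B = butlast (m a x # xs) @ m (last (m a x # xs)) y # ys"
    unfolding B_def by (cases xs) (simp_all add: assoc)
  have "kstar_gen m \<phi> ((a # x # xs) @ y # ys)
          = kstar_gen m \<phi> ((m a x # xs) @ y # ys) - \<phi> a * kstar_gen m \<phi> ((x # xs) @ y # ys)"
    by simp
  also have "\<dots> = kstar_gen m \<phi> (m a (hd B) # tl B) - \<phi> a * kstar_gen m \<phi> B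
                  - kstar_gen m \<phi> (a # x # xs) * kstar_gen m \<phi> (y # ys)"
    unfolding Cons.IH B_def[symmetric] B(2)[symmetric] by (simp add: algebra_simps)
  also have "\<dots> = kstar_gen m \<phi> (butlast (a # x # xs) @ m (last (a # x # xs)) y # ys)
                  - kstar_gen m \<phi> (a # x # xs) * kstar_gen m \<phi> (y # ys)"
    using kstar_gen_Cons[OF B(1), of m \<phi> a] by (simp add: B_def)
  finally show ?case .
qed

lemma kstar_gen_contract:
  assumes assoc: "\<And>x y z. m (m x y) z = m x (m y z)"
    and "0 < k" "k < length as"
  shows "kstar_gen m \<phi> as =
           kstar_gen m \<phi> (take (k - 1) as @ [m (as ! (k - 1)) (as ! k)] @ drop (k + 1) as)
           - kstar_gen m \<phi> (take k as) * kstar_gen m \<phi> (drop k as)"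
proof -
  obtain a xs where a: "take k as = a # xs"
    using assms by (cases "take k as") auto
  obtain y ys where y: "drop k as = y # ys"
    using assms by (cases "drop k as") auto
  have "take k as = take (k - 1) as @ [as ! (k - 1)]"
    using assms by (metis Suc_pred' Suc_lessD Suc_pred take_Suc_conv_app_nth)
  then have "butlast (a # xs) = take (k - 1) as" "last (a # xs) = as ! (k - 1)"
    by (simp_all flip: a)
  moreover have "drop k as = as ! k # drop (k + 1) as"
    using assms by (simp add: Cons_nth_drop_Suc)
  then have "y = as ! k" "ys = drop (k + 1) as"
    using y by simp_all
  ultimately show ?thesis
    using kstar_gen_append[OF assoc, of \<phi> a xs y ys] a y
    by (metis append_Cons append_Nil append_take_drop_id)
qed

lemma inner_complex_structure_left:
  assumes "complex_structure J"
  shows "inner (J x) y = - inner x (J y)"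
proof -
  have "\<forall>x. J (J x) = - x" "\<forall>x y. inner (J x) (J y) = inner x y"
    using assms by (simp_all add: complex_structure_def)
  then show ?thesis
    by (metis inner_minus_right minus_minus)
qed

lemma BH_comp: "a \<in> BH J \<Longrightarrow> b \<in> BH J \<Longrightarrow> a \<circ> b \<in> BH J"
  unfolding BH_def by (auto simp: bounded_linear_compose o_def fun_eq_iff)

lemma alt_prod_comp_Cons: "alt_prod (\<circ>) p ((a \<circ> b) # r) = a \<circ> alt_prod (\<circ>) p (b # r)"
  by (cases r) (auto simp: comp_assoc)

lemma cinner_apply_perp_proj:
  assumes J: "complex_structure J" and a: "a \<in> BH J"
  shows "cinner J (a (perp_proj J \<xi> y)) \<xi> = cinner J (a y) \<xi> - cinner J (a \<xi>) \<xi> * cinner J y \<xi>"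
proof -
  have "linear a" "a (J \<xi>) = J (a \<xi>)"
    using a by (auto simp: BH_def bounded_linear.linear fun_eq_iff dest: fun_cong[of _ _ \<xi>])
  then have perp: "a (perp_proj J \<xi> y) = a y - inner y \<xi> *\<^sub>R a \<xi> - inner y (J \<xi>) *\<^sub>R J (a \<xi>)"
    by (simp add: perp_proj_def linear_diff linear_scale)
  have "inner (J (a \<xi>)) \<xi> = - inner (a \<xi>) (J \<xi>)"
    "inner (J (a \<xi>)) (J \<xi>) = inner (a \<xi>) \<xi>"
    using J inner_complex_structure_left by (auto simp: complex_structure_def)
  then show ?thesis
    unfolding perp cinner_def complex_eq_iff
    by (simp add: inner_diff_left algebra_simps)
qed

lemma kstar_gen_vector_state:
  assumes J: "complex_structure J" and "a \<in> BH J" "set r \<subseteq> BH J"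
  shows "kstar_gen (\<circ>) (\<lambda>a. cinner J (a \<xi>) \<xi>) (a # r)
           = cinner J (alt_prod (\<circ>) (perp_proj J \<xi>) (a # r) \<xi>) \<xi>"
  using assms(2,3)
proof (induction r arbitrary: a)
  case Nil
  then show ?case by simp
next
  case (Cons b r)
  let ?\<psi> = "\<lambda>a. cinner J (a \<xi>) \<xi>" and ?\<Pi> = "\<lambda>l. alt_prod (\<circ>) (perp_proj J \<xi>) l \<xi>"
  have IH: "kstar_gen (\<circ>) ?\<psi> ((a \<circ> b) # r) = cinner J (?\<Pi> ((a \<circ> b) # r)) \<xi>"
    "kstar_gen (\<circ>) ?\<psi> (b # r) = cinner J (?\<Pi> (b # r)) \<xi>"
    using Cons.prems by (auto intro: Cons.IH BH_comp)
  have "kstar_gen (\<circ>) ?\<psi> (a # b # r) = kstar_gen (\<circ>) ?\<psi> ((a \<circ> b) # r) - ?\<psi> a * kstar_gen (\<circ>) ?\<psi> (b # r)"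
    by simp
  also have "\<dots> = cinner J (a (?\<Pi> (b # r))) \<xi> - ?\<psi> a * cinner J (?\<Pi> (b # r)) \<xi>"
    unfolding IH alt_prod_comp_Cons by simp
  also have "\<dots> = cinner J (a (perp_proj J \<xi> (?\<Pi> (b # r)))) \<xi>"
    using cinner_apply_perp_proj[OF J] Cons.prems by simp
  also have "\<dots> = cinner J (?\<Pi> (a # b # r)) \<xi>"
    by simp
  finally show ?case .
qed

theorem mainTheorem10:
  shows "(\<forall>(\<iota> :: complex \<Rightarrow> 'a::ring_1) (\<phi> :: 'a \<Rightarrow> complex).
            unital_calg_state \<iota> \<phi> \<longrightarrow>
            (\<forall>n k (as :: 'a list). 1 \<le> n \<and> 1 \<le> k \<and> k \<le> n \<and> length as = n + 1 \<longrightarrow>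
               kstar \<phi> as =
                 kstar \<phi> (take (k - 1) as @ [as ! (k - 1) * as ! k] @ drop (k + 1) as)
                 - kstar \<phi> (take k as) * kstar \<phi> (drop k as)))
       \<and> (\<forall>(J :: 'h::{real_inner,complete_space} \<Rightarrow> 'h) (\<xi> :: 'h).
            complex_structure J \<and> norm \<xi> = 1 \<longrightarrow>
            (\<forall>as. 1 \<le> length as \<and> set as \<subseteq> BH J \<longrightarrow>
               kstar_gen (\<circ>) (\<lambda>a. cinner J (a \<xi>) \<xi>) as
                 = cinner J (alt_prod (\<circ>) (perp_proj J \<xi>) as \<xi>) \<xi>))"
proof (intro conjI allI impI)
  fix \<phi> :: "'a \<Rightarrow> complex" and n k and as :: "'a list"
  assume "1 \<le> n \<and> 1 \<le> k \<and> k \<le> n \<and> length as = n + 1"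
  then show "kstar \<phi> as =
               kstar \<phi> (take (k - 1) as @ [as ! (k - 1) * as ! k] @ drop (k + 1) as)
               - kstar \<phi> (take k as) * kstar \<phi> (drop k as)"
    using kstar_gen_contract[of "(*)" k as \<phi>] by (simp add: mult.assoc)
next
  fix J :: "'h \<Rightarrow> 'h" and \<xi> :: 'h and as :: "('h \<Rightarrow> 'h) list"
  assume "complex_structure J \<and> norm \<xi> = 1" and "1 \<le> length as \<and> set as \<subseteq> BH J"
  then show "kstar_gen (\<circ>) (\<lambda>a. cinner J (a \<xi>) \<xi>) as
               = cinner J (alt_prod (\<circ>) (perp_proj J \<xi>) as \<xi>) \<xi>"
    using kstar_gen_vector_state[of J "hd as" "tl as" \<xi>] by (cases as) auto
qed

end
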